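(* (a) QHC is a strongly conservative extension of classical predicate calculus QC: if $p_1,\dots,p_n\vdash_{\mathrm{QHC}} p$ where $p_1,\dots,p_n,p$ are propositions built from atomic propositions and $0$ using only classical connectives and quantifiers (no $!$, $?$), then $p_1,\dots,p_n\vdash_{\mathrm{QC}} p$. (b) QHC is a strongly conservative extension of QS4 via $\Box\mapsto ?!$: if $A_1,\dots,A_n, A$ are formulas of QS4 and the rule $A_1^*,\dots,A_n^*\,/\,A^*$ is derivable in QHC, where $B^*$ denotes the result of replacing every $\Box$ in $B$ by $?!$, then $A_1,\dots,A_n\vdash_{\mathrm{QS4}} A$.
   Context: QHC is a two-sorted first-order calculus. Its only terms are individual variables. Every formula is either a problem (denoted by Greek letters $\alpha,\beta,\gamma,\dots$) or a proposition (denoted by Latin letters $p,q,\dots$). Atomic formulas are proposition variables $p(t_1,\dots,t_n)$ (of proposition type), problem variables $\pi(t_1,\dots,t_n)$ (of problem type), and the constants $0$ (a proposition, classical falsity) and $\bot$ (a problem, intuitionistic absurdity). Propositions are closed under the classical connectives $\land,\lor,\to$ and quantifiers $\exists,\forall$; problems are closed under the intuitionistic connectives $\land,\lor,\to$ and quantifiers $\exists,\forall$ (the same symbols are used, distinguished by the type of the arguments). $\neg p$ abbreviates $p\to 0$, $\neg\alpha$ abbreviates $\alpha\to\bot$, and $\leftrightarrow$ is defined as usual. There are two type-conversion operators: if $p$ is a proposition then $!p$ is a problem, and if $\alpha$ is a problem then $?\alpha$ is a proposition. Deductive system of QHC: all axioms and rules of classical predicate logic applied to all propositions; all postulates and rules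 of intuitionistic predicate logic applied to all problems; the rules $p\,/\,!p$ and $\alpha\,/\,?\alpha$; and the schemas $?!p\to p$; $\alpha\to\, !?\alpha$; $!(p\to q)\to(!p\to !q)$; $?(\alpha\to\beta)\to(?\alpha\to ?\beta)$; $!0\to\bot$; $?(\alpha\land\beta)\leftrightarrow ?\alpha\land ?\beta$; $?(\alpha\lor\beta)\leftrightarrow ?\alpha\lor ?\beta$; $?\bot\to 0$; $?\exists x\,\alpha(x)\leftrightarrow\exists x\,?\alpha(x)$; $?\forall x\,\alpha(x)\to\forall x\,?\alpha(x)$ (usual variable side conditions implicit). $\vdash A$ means $A$ is derivable in QHC; $A\Rightarrow B$ means $\vdash A\to B$ and $A\Leftrightarrow B$ means $\vdash A\leftrightarrow B$ (with $A,B$ of the same type); $A\vdash B$ means $B$ is derivable in QHC from the premise $A$. Notation: $\Box p := ?!p$ (a proposition) and $\nabla\alpha := !?\alpha$ (a problem). QC and QH denote classical and intuitionistic predicate calculus. QS4 is classical predicate calculus (over the proposition variables of QHC) with a unary connective $\Box$, axiom schemes $\Box p\to p$, $\Box p\to\Box\Box p$, $\Box(p\to q)\to(\Box p\to\Box q)$ and rule $p\,/\,\Box p$. *)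

theory Defs
  imports Main
begin

text \<open>Individual variables are natural numbers used as de Bruijn indices: a quantifier
binds index 0 of its body; indices beyond the enclosing binders are free variables.\<close>

definition up :: "(nat \<Rightarrow> nat) \<Rightarrow> nat \<Rightarrow> nat" where
  "up f = (\<lambda>i. case i of 0 \<Rightarrow> 0 | Suc j \<Rightarrow> Suc (f j))"

definition inst0 :: "nat \<Rightarrow> nat \<Rightarrow> nat" where
  "inst0 t = (\<lambda>i. case i of 0 \<Rightarrow> t | Suc j \<Rightarrow> j)"

text \<open>Propositions (qprop) and problems (qprob). PVar P xs is the proposition variable P
applied to the individual variables xs; QVar similarly for problem variables.\<close>

datatype qprop =
    PVar nat "nat list"
  | PFalse
  | PAnd qprop qprop
  | POr qprop qprop
  | PImp qprop qprop
  | PEx qprop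
  | PAll qprop
  | Ques qprob
and qprob =
    QVar nat "nat list"
  | QBot
  | QAnd qprob qprob
  | QOr qprob qprob
  | QImp qprob qprob
  | QEx qprob
  | QAll qprob
  | Bang qprop

primrec pmap :: "(nat \<Rightarrow> nat) \<Rightarrow> qprop \<Rightarrow> qprop"
  and qmap :: "(nat \<Rightarrow> nat) \<Rightarrow> qprob \<Rightarrow> qprob" where
  "pmap f (PVar P xs) = PVar P (map f xs)"
| "pmap f PFalse = PFalse"
| "pmap f (PAnd a b) = PAnd (pmap f a) (pmap f b)"
| "pmap f (POr a b) = POr (pmap f a) (pmap f b)"
| "pmap f (PImp a b) = PImp (pmap f a) (pmap f b)"
| "pmap f (PEx a) = PEx (pmap (up f) a)"
| "pmap f (PAll a) = PAll (pmap (up f) a)"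
| "pmap f (Ques a) = Ques (qmap f a)"
| "qmap f (QVar P xs) = QVar P (map f xs)"
| "qmap f QBot = QBot"
| "qmap f (QAnd a b) = QAnd (qmap f a) (qmap f b)"
| "qmap f (QOr a b) = QOr (qmap f a) (qmap f b)"
| "qmap f (QImp a b) = QImp (qmap f a) (qmap f b)"
| "qmap f (QEx a) = QEx (qmap (up f) a)"
| "qmap f (QAll a) = QAll (qmap (up f) a)"
| "qmap f (Bang a) = Bang (pmap f a)"

definition PIff :: "qprop \<Rightarrow> qprop \<Rightarrow> qprop" where
  "PIff a b = PAnd (PImp a b) (PImp b a)"

text \<open>Premises are treated as extra
axioms to which all rules (including generalization, p/!p and \<alpha>/?\<alpha>) apply.\<close>

inductive qhcP :: "qprop set \<Rightarrow> qprob set \<Rightarrow> qprop \<Rightarrow> bool"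
  and qhcQ :: "qprop set \<Rightarrow> qprob set \<Rightarrow> qprob \<Rightarrow> bool"
  for \<Gamma> :: "qprop set" and \<Delta> :: "qprob set" where
  P_hyp: "p \<in> \<Gamma> \<Longrightarrow> qhcP \<Gamma> \<Delta> p"
| Q_hyp: "a \<in> \<Delta> \<Longrightarrow> qhcQ \<Gamma> \<Delta> a"
| P_K: "qhcP \<Gamma> \<Delta> (PImp p (PImp q p))"
| P_S: "qhcP \<Gamma> \<Delta> (PImp (PImp p (PImp q r)) (PImp (PImp p q) (PImp p r)))"
| P_conj1: "qhcP \<Gamma> \<Delta> (PImp (PAnd p q) p)"
| P_conj2: "qhcP \<Gamma> \<Delta> (PImp (PAnd p q) q)"
| P_conjI: "qhcP \<Gamma> \<Delta> (PImp p (PImp q (PAnd p q)))"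
| P_disj1: "qhcP \<Gamma> \<Delta> (PImp p (POr p q))"
| P_disj2: "qhcP \<Gamma> \<Delta> (PImp q (POr p q))"
| P_disjE: "qhcP \<Gamma> \<Delta> (PImp (PImp p r) (PImp (PImp q r) (PImp (POr p q) r)))"
| P_efq: "qhcP \<Gamma> \<Delta> (PImp PFalse p)"
| P_dne: "qhcP \<Gamma> \<Delta> (PImp (PImp (PImp p PFalse) PFalse) p)"
| P_allE: "qhcP \<Gamma> \<Delta> (PImp (PAll p) (pmap (inst0 t) p))"
| P_exI: "qhcP \<Gamma> \<Delta> (PImp (pmap (inst0 t) p) (PEx p))"
| P_mp: "qhcP \<Gamma> \<Delta> p \<Longrightarrow> qhcP \<Gamma> \<Delta> (PImp p q) \<Longrightarrow> qhcP \<Gamma> \<Delta> q"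
| P_allI: "qhcP \<Gamma> \<Delta> (PImp (pmap Suc q) p) \<Longrightarrow> qhcP \<Gamma> \<Delta> (PImp q (PAll p))"
| P_exE: "qhcP \<Gamma> \<Delta> (PImp p (pmap Suc q)) \<Longrightarrow> qhcP \<Gamma> \<Delta> (PImp (PEx p) q)"
| Q_K: "qhcQ \<Gamma> \<Delta> (QImp a (QImp b a))"
| Q_S: "qhcQ \<Gamma> \<Delta> (QImp (QImp a (QImp b c)) (QImp (QImp a b) (QImp a c)))"
| Q_conj1: "qhcQ \<Gamma> \<Delta> (QImp (QAnd a b) a)"
| Q_conj2: "qhcQ \<Gamma> \<Delta> (QImp (QAnd a b) b)"
| Q_conjI: "qhcQ \<Gamma> \<Delta> (QImp a (QImp b (QAnd a b)))"
| Q_disj1: "qhcQ \<Gamma> \<Delta> (QImp a (QOr a b))"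
| Q_disj2: "qhcQ \<Gamma> \<Delta> (QImp b (QOr a b))"
| Q_disjE: "qhcQ \<Gamma> \<Delta> (QImp (QImp a c) (QImp (QImp b c) (QImp (QOr a b) c)))"
| Q_efq: "qhcQ \<Gamma> \<Delta> (QImp QBot a)"
| Q_allE: "qhcQ \<Gamma> \<Delta> (QImp (QAll a) (qmap (inst0 t) a))"
| Q_exI: "qhcQ \<Gamma> \<Delta> (QImp (qmap (inst0 t) a) (QEx a))"
| Q_mp: "qhcQ \<Gamma> \<Delta> a \<Longrightarrow> qhcQ \<Gamma> \<Delta> (QImp a b) \<Longrightarrow> qhcQ \<Gamma> \<Delta> b"
| Q_allI: "qhcQ \<Gamma> \<Delta> (QImp (qmap Suc b) a) \<Longrightarrow> qhcQ \<Gamma> \<Delta> (QImp b (QAll a))"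
| Q_exE: "qhcQ \<Gamma> \<Delta> (QImp a (qmap Suc b)) \<Longrightarrow> qhcQ \<Gamma> \<Delta> (QImp (QEx a) b)"
| bang_rule: "qhcP \<Gamma> \<Delta> p \<Longrightarrow> qhcQ \<Gamma> \<Delta> (Bang p)"
| ques_rule: "qhcQ \<Gamma> \<Delta> a \<Longrightarrow> qhcP \<Gamma> \<Delta> (Ques a)"
| ax_qb: "qhcP \<Gamma> \<Delta> (PImp (Ques (Bang p)) p)"
| ax_bq: "qhcQ \<Gamma> \<Delta> (QImp a (Bang (Ques a)))"
| ax_bang_imp: "qhcQ \<Gamma> \<Delta> (QImp (Bang (PImp p q)) (QImp (Bang p) (Bang q)))"
| ax_ques_imp: "qhcP \<Gamma> \<Delta> (PImp (Ques (QImp a b)) (PImp (Ques a) (Ques b)))"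
| ax_bang_false: "qhcQ \<Gamma> \<Delta> (QImp (Bang PFalse) QBot)"
| ax_ques_and: "qhcP \<Gamma> \<Delta> (PIff (Ques (QAnd a b)) (PAnd (Ques a) (Ques b)))"
| ax_ques_or: "qhcP \<Gamma> \<Delta> (PIff (Ques (QOr a b)) (POr (Ques a) (Ques b)))"
| ax_ques_bot: "qhcP \<Gamma> \<Delta> (PImp (Ques QBot) PFalse)"
| ax_ques_ex: "qhcP \<Gamma> \<Delta> (PIff (Ques (QEx a)) (PEx (Ques a)))"
| ax_ques_all: "qhcP \<Gamma> \<Delta> (PImp (Ques (QAll a)) (PAll (Ques a)))"

datatype cfm =
    CVar nat "nat list"
  | CFalse
  | CAnd cfm cfm
  | COr cfm cfm
  | CImp cfm cfm
  | CEx cfm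
  | CAll cfm

primrec cmap :: "(nat \<Rightarrow> nat) \<Rightarrow> cfm \<Rightarrow> cfm" where
  "cmap f (CVar P xs) = CVar P (map f xs)"
| "cmap f CFalse = CFalse"
| "cmap f (CAnd a b) = CAnd (cmap f a) (cmap f b)"
| "cmap f (COr a b) = COr (cmap f a) (cmap f b)"
| "cmap f (CImp a b) = CImp (cmap f a) (cmap f b)"
| "cmap f (CEx a) = CEx (cmap (up f) a)"
| "cmap f (CAll a) = CAll (cmap (up f) a)"

inductive qc :: "cfm set \<Rightarrow> cfm \<Rightarrow> bool" for \<Gamma> :: "cfm set" where
  C_hyp: "p \<in> \<Gamma> \<Longrightarrow> qc \<Gamma> p"
| C_K: "qc \<Gamma> (CImp p (CImp q p))"
| C_S: "qc \<Gamma> (CImp (CImp p (CImp q r)) (CImp (CImp p q) (CImp p r)))"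
| C_conj1: "qc \<Gamma> (CImp (CAnd p q) p)"
| C_conj2: "qc \<Gamma> (CImp (CAnd p q) q)"
| C_conjI: "qc \<Gamma> (CImp p (CImp q (CAnd p q)))"
| C_disj1: "qc \<Gamma> (CImp p (COr p q))"
| C_disj2: "qc \<Gamma> (CImp q (COr p q))"
| C_disjE: "qc \<Gamma> (CImp (CImp p r) (CImp (CImp q r) (CImp (COr p q) r)))"
| C_efq: "qc \<Gamma> (CImp CFalse p)"
| C_dne: "qc \<Gamma> (CImp (CImp (CImp p CFalse) CFalse) p)"
| C_allE: "qc \<Gamma> (CImp (CAll p) (cmap (inst0 t) p))"
| C_exI: "qc \<Gamma> (CImp (cmap (inst0 t) p) (CEx p))"
| C_mp: "qc \<Gamma> p \<Longrightarrow> qc \<Gamma> (CImp p q) \<Longrightarrow> qc \<Gamma> q"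
| C_allI: "qc \<Gamma> (CImp (cmap Suc q) p) \<Longrightarrow> qc \<Gamma> (CImp q (CAll p))"
| C_exE: "qc \<Gamma> (CImp p (cmap Suc q)) \<Longrightarrow> qc \<Gamma> (CImp (CEx p) q)"

primrec emb :: "cfm \<Rightarrow> qprop" where
  "emb (CVar P xs) = PVar P xs"
| "emb CFalse = PFalse"
| "emb (CAnd a b) = PAnd (emb a) (emb b)"
| "emb (COr a b) = POr (emb a) (emb b)"
| "emb (CImp a b) = PImp (emb a) (emb b)"
| "emb (CEx a) = PEx (emb a)"
| "emb (CAll a) = PAll (emb a)"

datatype sfm =
    SVar nat "nat list"
  | SFalse
  | SAnd sfm sfm
  | SOr sfm sfm
  | SImp sfm sfm
  | SEx sfm
  | SAll sfm
  | SBox sfm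

primrec smap :: "(nat \<Rightarrow> nat) \<Rightarrow> sfm \<Rightarrow> sfm" where
  "smap f (SVar P xs) = SVar P (map f xs)"
| "smap f SFalse = SFalse"
| "smap f (SAnd a b) = SAnd (smap f a) (smap f b)"
| "smap f (SOr a b) = SOr (smap f a) (smap f b)"
| "smap f (SImp a b) = SImp (smap f a) (smap f b)"
| "smap f (SEx a) = SEx (smap (up f) a)"
| "smap f (SAll a) = SAll (smap (up f) a)"
| "smap f (SBox a) = SBox (smap f a)"

inductive qs4 :: "sfm set \<Rightarrow> sfm \<Rightarrow> bool" for \<Gamma> :: "sfm set" where
  S_hyp: "p \<in> \<Gamma> \<Longrightarrow> qs4 \<Gamma> p"
| S_K: "qs4 \<Gamma> (SImp p (SImp q p))"
| S_S: "qs4 \<Gamma> (SImp (SImp p (SImp q r)) (SImp (SImp p q) (SImp p r)))"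
| S_conj1: "qs4 \<Gamma> (SImp (SAnd p q) p)"
| S_conj2: "qs4 \<Gamma> (SImp (SAnd p q) q)"
| S_conjI: "qs4 \<Gamma> (SImp p (SImp q (SAnd p q)))"
| S_disj1: "qs4 \<Gamma> (SImp p (SOr p q))"
| S_disj2: "qs4 \<Gamma> (SImp q (SOr p q))"
| S_disjE: "qs4 \<Gamma> (SImp (SImp p r) (SImp (SImp q r) (SImp (SOr p q) r)))"
| S_efq: "qs4 \<Gamma> (SImp SFalse p)"
| S_dne: "qs4 \<Gamma> (SImp (SImp (SImp p SFalse) SFalse) p)"
| S_allE: "qs4 \<Gamma> (SImp (SAll p) (smap (inst0 t) p))"
| S_exI: "qs4 \<Gamma> (SImp (smap (inst0 t) p) (SEx p))"
| S_mp: "qs4 \<Gamma> p \<Longrightarrow> qs4 \<Gamma> (SImp p q) \<Longrightarrow> qs4 \<Gamma> q"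
| S_allI: "qs4 \<Gamma> (SImp (smap Suc q) p) \<Longrightarrow> qs4 \<Gamma> (SImp q (SAll p))"
| S_exE: "qs4 \<Gamma> (SImp p (smap Suc q)) \<Longrightarrow> qs4 \<Gamma> (SImp (SEx p) q)"
| S_T: "qs4 \<Gamma> (SImp (SBox p) p)"
| S_4: "qs4 \<Gamma> (SImp (SBox p) (SBox (SBox p)))"
| S_Kbox: "qs4 \<Gamma> (SImp (SBox (SImp p q)) (SImp (SBox p) (SBox q)))"
| S_nec: "qs4 \<Gamma> p \<Longrightarrow> qs4 \<Gamma> (SBox p)"

primrec star :: "sfm \<Rightarrow> qprop" where
  "star (SVar P xs) = PVar P xs"
| "star SFalse = PFalse"
| "star (SAnd a b) = PAnd (star a) (star b)"
| "star (SOr a b) = POr (star a) (star b)"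
| "star (SImp a b) = PImp (star a) (star b)"
| "star (SEx a) = PEx (star a)"
| "star (SAll a) = PAll (star a)"
| "star (SBox a) = Ques (Bang (star a))"

end

theory Submission
  imports Defs
begin

text \<open>Read a problem as the proposition "it is solved": translate problems into QS4 by
\<open>!p \<mapsto> \<box>p\<close>, \<open>\<alpha> \<rightarrow> \<beta> \<mapsto> \<box>(\<alpha> \<rightarrow> \<beta>)\<close>, \<open>\<forall>x \<alpha> \<mapsto> \<box>\<forall>x \<alpha>\<close>, and drop \<open>?\<close>.
Every translated problem then implies its own box, and with this invariant every axiom and
rule of QHC becomes derivable in QS4. The translation undoes \<open>B \<mapsto> B*\<close>, which gives (b);
erasing all boxes maps QS4 into QC, which gives (a).\<close>

lemma qs4_imp_refl: "qs4 G (SImp A A)"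
  using S_mp[OF S_K[of G A A] S_mp[OF S_K[of G A "SImp A A"] S_S[of G A "SImp A A" A]]] .

lemma qs4_imp_weaken: "qs4 G B \<Longrightarrow> qs4 G (SImp A B)"
  using S_mp S_K by blast

lemma qs4_imp_mp: "qs4 G (SImp A (SImp B C)) \<Longrightarrow> qs4 G (SImp A B) \<Longrightarrow> qs4 G (SImp A C)"
  using S_mp S_S by blast

lemma qs4_imp_trans: "qs4 G (SImp A B) \<Longrightarrow> qs4 G (SImp B C) \<Longrightarrow> qs4 G (SImp A C)"
  by (rule qs4_imp_mp[OF qs4_imp_weaken])

lemma qs4_imp_conjI: "qs4 G (SImp A B) \<Longrightarrow> qs4 G (SImp A C) \<Longrightarrow> qs4 G (SImp A (SAnd B C))"
  by (rule qs4_imp_mp[OF qs4_imp_trans[OF _ S_conjI]])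

lemma qs4_imp_uncurry: "qs4 G (SImp A (SImp B C)) \<Longrightarrow> qs4 G (SImp (SAnd A B) C)"
  by (rule qs4_imp_mp[OF qs4_imp_trans[OF S_conj1] S_conj2])

lemma qs4_imp_curry: "qs4 G (SImp (SAnd A B) C) \<Longrightarrow> qs4 G (SImp A (SImp B C))"
proof -
  assume "qs4 G (SImp (SAnd A B) C)"
  then have "qs4 G (SImp (SImp B (SAnd A B)) (SImp B C))"
    using S_mp S_S qs4_imp_weaken by blast
  then show ?thesis
    using qs4_imp_trans[OF S_conjI] by blast
qed

lemma qs4_imp_disjE: "qs4 G (SImp A C) \<Longrightarrow> qs4 G (SImp B C) \<Longrightarrow> qs4 G (SImp (SOr A B) C)"
  using S_mp S_disjE by blast

lemma qs4_conjI: "qs4 G A \<Longrightarrow> qs4 G B \<Longrightarrow> qs4 G (SAnd A B)"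
  using S_mp S_conjI by blast

lemma qs4_box_mono: "qs4 G (SImp A B) \<Longrightarrow> qs4 G (SImp (SBox A) (SBox B))"
  using S_mp S_Kbox S_nec by blast

lemma qs4_box_conj: "qs4 G (SImp (SAnd (SBox A) (SBox B)) (SBox (SAnd A B)))"
  by (rule qs4_imp_uncurry[OF qs4_imp_trans[OF qs4_box_mono[OF S_conjI] S_Kbox]])

lemma qs4_box_mono2:
  "qs4 G (SImp (SAnd A B) C) \<Longrightarrow> qs4 G (SImp (SAnd (SBox A) (SBox B)) (SBox C))"
  by (rule qs4_imp_trans[OF qs4_box_conj qs4_box_mono])

lemma qs4_box_intro: "qs4 G (SImp (SBox A) B) \<Longrightarrow> qs4 G (SImp (SBox A) (SBox B))"
  by (rule qs4_imp_trans[OF S_4 qs4_box_mono])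

lemma qs4_box_elim: "qs4 G (SBox A) \<Longrightarrow> qs4 G A"
  by (rule S_mp[OF _ S_T])

lemma qs4_imp_box_imp_mp:
  "qs4 G (SImp (SAnd (SImp A (SBox (SImp B C))) (SImp A B)) (SImp A C))"
proof -
  let ?Z = "SAnd (SAnd (SImp A (SBox (SImp B C))) (SImp A B)) A"
  have "qs4 G (SImp ?Z A)" by (rule S_conj2)
  moreover have "qs4 G (SImp ?Z (SImp A (SBox (SImp B C))))"
    by (rule qs4_imp_trans[OF S_conj1 S_conj1])
  moreover have "qs4 G (SImp ?Z (SImp A B))"
    by (rule qs4_imp_trans[OF S_conj1 S_conj2])
  ultimately have "qs4 G (SImp ?Z (SImp B C))" and "qs4 G (SImp ?Z B)"
    using qs4_imp_mp qs4_imp_trans[OF _ S_T] by blast+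
  then show ?thesis
    by (blast intro: qs4_imp_curry qs4_imp_mp)
qed

lemma up_comp: "up f \<circ> up g = up (f \<circ> g)"
  by (auto simp: up_def split: nat.split)

lemma up_id: "up (\<lambda>i. i) = (\<lambda>i. i)"
  by (auto simp: up_def split: nat.split)

lemma inst0_comp_up_Suc: "inst0 0 \<circ> up Suc = (\<lambda>i. i)"
  by (auto simp: up_def inst0_def split: nat.split)

lemma smap_smap: "smap f (smap g A) = smap (f \<circ> g) A"
  by (induction A arbitrary: f g) (auto simp: up_comp)

lemma smap_id: "smap (\<lambda>i. i) A = A"
  by (induction A) (auto simp: up_id)

lemma qs4_imp_ex_lift: "qs4 G (SImp A (smap Suc (SEx A)))"
proof -
  have "smap (inst0 0) (smap (up Suc) A) = A"
    by (simp add: smap_smap inst0_comp_up_Suc smap_id)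
  then show ?thesis
    using S_exI[of G 0 "smap (up Suc) A"] by simp
qed

text \<open>Problem variables are read as falsity: any formula implying its own box would do.\<close>

primrec tr_prop :: "qprop \<Rightarrow> sfm" and tr_prob :: "qprob \<Rightarrow> sfm" where
  "tr_prop (PVar P xs) = SVar P xs"
| "tr_prop PFalse = SFalse"
| "tr_prop (PAnd p q) = SAnd (tr_prop p) (tr_prop q)"
| "tr_prop (POr p q) = SOr (tr_prop p) (tr_prop q)"
| "tr_prop (PImp p q) = SImp (tr_prop p) (tr_prop q)"
| "tr_prop (PEx p) = SEx (tr_prop p)"
| "tr_prop (PAll p) = SAll (tr_prop p)"
| "tr_prop (Ques a) = tr_prob a"
| "tr_prob (QVar P xs) = SFalse"
| "tr_prob QBot = SFalse"
| "tr_prob (QAnd a b) = SAnd (tr_prob a) (tr_prob b)"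
| "tr_prob (QOr a b) = SOr (tr_prob a) (tr_prob b)"
| "tr_prob (QImp a b) = SBox (SImp (tr_prob a) (tr_prob b))"
| "tr_prob (QEx a) = SEx (tr_prob a)"
| "tr_prob (QAll a) = SBox (SAll (tr_prob a))"
| "tr_prob (Bang p) = SBox (tr_prop p)"

lemma tr_prop_pmap: "tr_prop (pmap f p) = smap f (tr_prop p)"
  and tr_prob_qmap: "tr_prob (qmap f a) = smap f (tr_prob a)"
  by (induction p and a arbitrary: f and f) auto

lemma tr_prob_boxed: "qs4 G (SImp (tr_prob a) (SBox (tr_prob a)))"
proof (induction a rule: qprob.induct[where ?P1.0 = "\<lambda>_. True"])
  case (QAnd a b)
  have "qs4 G (SImp (SAnd (tr_prob a) (tr_prob b)) (SAnd (SBox (tr_prob a)) (SBox (tr_prob b))))"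
    by (rule qs4_imp_conjI[OF qs4_imp_trans[OF S_conj1 QAnd(1)] qs4_imp_trans[OF S_conj2 QAnd(2)]])
  then have "qs4 G (SImp (SAnd (tr_prob a) (tr_prob b)) (SBox (SAnd (tr_prob a) (tr_prob b))))"
    by (rule qs4_imp_trans[OF _ qs4_box_conj])
  then show ?case by simp
next
  case (QOr a b)
  have "qs4 G (SImp (SOr (tr_prob a) (tr_prob b)) (SBox (SOr (tr_prob a) (tr_prob b))))"
    by (rule qs4_imp_disjE[OF qs4_imp_trans[OF QOr(1) qs4_box_mono[OF S_disj1]]
          qs4_imp_trans[OF QOr(2) qs4_box_mono[OF S_disj2]]])
  then show ?case by simp
next
  case (QEx a)
  have "qs4 G (SImp (tr_prob a) (smap Suc (SBox (SEx (tr_prob a)))))"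
    using qs4_imp_trans[OF QEx qs4_box_mono[OF qs4_imp_ex_lift]] by simp
  then show ?case
    by (simp add: S_exE)
qed (simp_all add: S_efq S_4)

lemma qhcP_imp_qs4_tr_prop:
    "qhcP \<Gamma> \<Delta> p \<Longrightarrow> qs4 (tr_prop ` \<Gamma> \<union> tr_prob ` \<Delta>) (tr_prop p)"
  and qhcQ_imp_qs4_tr_prob:
    "qhcQ \<Gamma> \<Delta> a \<Longrightarrow> qs4 (tr_prop ` \<Gamma> \<union> tr_prob ` \<Delta>) (tr_prob a)"
proof (induction rule: qhcP_qhcQ.inducts)
  case (P_hyp p)
  then show ?case by (simp add: S_hyp)
next
  case (Q_hyp a)
  then show ?case by (simp add: S_hyp)
next
  case (P_mp p q)
  then show ?case by (auto intro: S_mp[of _ "tr_prop p"])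
next
  case (P_allI q p)
  then show ?case using S_allI by (simp add: tr_prop_pmap)
next
  case (P_exE p q)
  then show ?case using S_exE by (simp add: tr_prop_pmap)
next
  case (Q_K a b)
  show ?case
    using S_nec[OF qs4_imp_trans[OF tr_prob_boxed qs4_box_mono[OF S_K]]] by simp
next
  case (Q_S a b c)
  show ?case
    using S_nec[OF qs4_box_intro[OF qs4_imp_curry[OF qs4_box_mono2[OF qs4_imp_box_imp_mp]]]]
    by simp
next
  case (Q_conjI a b)
  show ?case
    using S_nec[OF qs4_imp_trans[OF tr_prob_boxed qs4_box_mono[OF S_conjI]]] by simp
next
  case (Q_disjE a c b)
  show ?case
    using S_nec[OF qs4_box_intro[OF qs4_imp_curry[OF qs4_box_mono2[OF
            qs4_imp_uncurry[OF S_disjE]]]]] by simp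
next
  case (Q_allE a t)
  show ?case
    using S_nec[OF qs4_imp_trans[OF S_T S_allE]] by (simp add: tr_prob_qmap)
next
  case (Q_exI t a)
  show ?case
    using S_nec[OF S_exI] by (simp add: tr_prob_qmap)
next
  case (Q_mp a b)
  then show ?case by (auto intro: S_mp[of _ "tr_prob a"] qs4_box_elim)
next
  case (Q_allI b a)
  then have "qs4 (tr_prop ` \<Gamma> \<union> tr_prob ` \<Delta>) (SImp (tr_prob b) (SAll (tr_prob a)))"
    using S_allI qs4_box_elim by (simp add: tr_prob_qmap)
  then show ?case
    using S_nec[OF qs4_imp_trans[OF tr_prob_boxed qs4_box_mono]] by simp
next
  case (Q_exE a b)
  then have "qs4 (tr_prop ` \<Gamma> \<union> tr_prob ` \<Delta>) (SImp (SEx (tr_prob a)) (tr_prob b))"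
    using S_exE qs4_box_elim by (simp add: tr_prob_qmap)
  then show ?case
    using S_nec by simp
next
  case (bang_rule p)
  then show ?case using S_nec by simp
next
  case (ax_bq a)
  show ?case using S_nec[OF tr_prob_boxed] by simp
next
  case (ax_bang_imp p q)
  show ?case using S_nec[OF qs4_box_intro[OF S_Kbox]] by simp
qed (simp_all add: tr_prop_pmap tr_prob_qmap PIff_def qs4_conjI qs4_imp_refl S_nec
    S_K S_S S_conj1 S_conj2 S_conjI S_disj1 S_disj2 S_disjE S_efq S_dne S_allE S_exI S_T)

primrec sfm_of_cfm :: "cfm \<Rightarrow> sfm" where
  "sfm_of_cfm (CVar P xs) = SVar P xs"
| "sfm_of_cfm CFalse = SFalse"
| "sfm_of_cfm (CAnd a b) = SAnd (sfm_of_cfm a) (sfm_of_cfm b)"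
| "sfm_of_cfm (COr a b) = SOr (sfm_of_cfm a) (sfm_of_cfm b)"
| "sfm_of_cfm (CImp a b) = SImp (sfm_of_cfm a) (sfm_of_cfm b)"
| "sfm_of_cfm (CEx a) = SEx (sfm_of_cfm a)"
| "sfm_of_cfm (CAll a) = SAll (sfm_of_cfm a)"

primrec erase_box :: "sfm \<Rightarrow> cfm" where
  "erase_box (SVar P xs) = CVar P xs"
| "erase_box SFalse = CFalse"
| "erase_box (SAnd a b) = CAnd (erase_box a) (erase_box b)"
| "erase_box (SOr a b) = COr (erase_box a) (erase_box b)"
| "erase_box (SImp a b) = CImp (erase_box a) (erase_box b)"
| "erase_box (SEx a) = CEx (erase_box a)"
| "erase_box (SAll a) = CAll (erase_box a)"
| "erase_box (SBox a) = erase_box a"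

lemma tr_prop_star: "tr_prop (star A) = A"
  by (induction A) auto

lemma tr_prop_emb: "tr_prop (emb p) = sfm_of_cfm p"
  by (induction p) auto

lemma erase_box_sfm_of_cfm: "erase_box (sfm_of_cfm p) = p"
  by (induction p) auto

lemma erase_box_smap: "erase_box (smap f A) = cmap f (erase_box A)"
  by (induction A arbitrary: f) auto

lemma qc_imp_refl: "qc G (CImp A A)"
  using C_mp[OF C_K[of G A A] C_mp[OF C_K[of G A "CImp A A"] C_S[of G A "CImp A A" A]]] .

lemma qs4_imp_qc_erase_box: "qs4 G A \<Longrightarrow> qc (erase_box ` G) (erase_box A)"
proof (induction rule: qs4.induct)
  case (S_mp p q)
  then show ?case by (auto intro: C_mp[of _ "erase_box p"])
qed (simp_all add: erase_box_smap qc_imp_refl C_hyp C_K C_S C_conj1 C_conj2 C_conjI C_disj1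
    C_disj2 C_disjE C_efq C_dne C_allE C_exI C_allI C_exE)

theorem theorem3p2:
  shows "(\<forall>(ps :: cfm list) (p :: cfm).
            qhcP (set (map emb ps)) {} (emb p) \<longrightarrow> qc (set ps) p)
       \<and> (\<forall>(As :: sfm list) (A :: sfm).
            qhcP (set (map star As)) {} (star A) \<longrightarrow> qs4 (set As) A)"
proof (intro conjI allI impI)
  fix ps p
  assume "qhcP (set (map emb ps)) {} (emb p)"
  then have "qs4 (tr_prop ` set (map emb ps) \<union> tr_prob ` {}) (tr_prop (emb p))"
    by (rule qhcP_imp_qs4_tr_prop)
  then have "qs4 (sfm_of_cfm ` set ps) (sfm_of_cfm p)"
    by (simp add: image_image tr_prop_emb)
  then have "qc (erase_box ` sfm_of_cfm ` set ps) (erase_box (sfm_of_cfm p))"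
    by (rule qs4_imp_qc_erase_box)
  then show "qc (set ps) p"
    by (simp add: image_image erase_box_sfm_of_cfm)
next
  fix As A
  assume "qhcP (set (map star As)) {} (star A)"
  then have "qs4 (tr_prop ` set (map star As) \<union> tr_prob ` {}) (tr_prop (star A))"
    by (rule qhcP_imp_qs4_tr_prop)
  then show "qs4 (set As) A"
    by (simp add: image_image tr_prop_star)
qed

end
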